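(* Let $n\ge3$ and $k>n$ be integers and let $X$ be the discrete-time Markov chain on $\mathbb{N}^{n-1}$ described in the context (which is then stable). If $\mathbf{Q}$ is a random vector distributed according to the stationary distribution of $X$, then $\mathbb{E}[|\mathbf{Q}|]<\infty$.
   Context: $\mathbb{N}=\{0,1,2,\dots\}$, $|\mathbf{x}|=x_1+\dots+x_{n-1}$. $\mathbf{0}$, $\mathbf{1}$ are the all-zero and all-one vectors of dimension $n-1$, $\mathbf{e}_l$ the $l$-th unit vector. For $j=0,\dots,n-1$, $R_j$ is the set of $\mathbf{x}\in\mathbb{N}^{n-1}$ with exactly $j$ zero entries. $X$ is the Markov chain on $\mathbb{N}^{n-1}$ with nonzero transition probabilities: from $\mathbf{x}\in R_0$, to $\mathbf{x}-\mathbf{1}$ w.p. $\frac{k-(n-1)}{k}$ and to $\mathbf{x}+\mathbf{e}_l$ w.p. $\frac1k$ ($l=1,\dots,n-1$); from $\mathbf{x}\in R_j$, $1\le j\le n-2$, to $\mathbf{x}+\mathbf{e}_l$ w.p. $\frac{k-(n-1-j)}{kj}$ if $x_l=0$ and w.p. $\frac1k$ if $x_l\ge1$; from $\mathbf{0}$ to $\mathbf{e}_l$ w.p. $\frac1{n-1}$. *)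

theory Defs
  imports "HOL-Probability.Probability"
begin

text \<open>States of the chain: vectors in N^(n-1), encoded as functions nat => nat
  supported on the index set {0..<n-1} (coordinate l of the paper is index l-1 here).\<close>

definition states :: "nat \<Rightarrow> (nat \<Rightarrow> nat) set" where
  "states n = {x. \<forall>i\<ge>n - 1. x i = 0}"

definition norm1 :: "nat \<Rightarrow> (nat \<Rightarrow> nat) \<Rightarrow> nat" where
  "norm1 n x = (\<Sum>i<n - 1. x i)"

definition unitv :: "nat \<Rightarrow> nat \<Rightarrow> nat" where
  "unitv l = (\<lambda>i. if i = l then 1 else 0)"

definition incr :: "(nat \<Rightarrow> nat) \<Rightarrow> nat \<Rightarrow> nat \<Rightarrow> nat" where
  "incr x l = (\<lambda>i. if i = l then x i + 1 else x i)"

definition dec_all :: "nat \<Rightarrow> (nat \<Rightarrow> nat) \<Rightarrow> nat \<Rightarrow> nat" where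
  "dec_all n x = (\<lambda>i. if i < n - 1 then x i - 1 else 0)"

definition nzeros :: "nat \<Rightarrow> (nat \<Rightarrow> nat) \<Rightarrow> nat" where
  "nzeros n x = card {i. i < n - 1 \<and> x i = 0}"

definition trans_prob :: "nat \<Rightarrow> nat \<Rightarrow> (nat \<Rightarrow> nat) \<Rightarrow> (nat \<Rightarrow> nat) \<Rightarrow> real" where
  "trans_prob n k x y =
    (let m = n - 1; j = nzeros n x in
     if j = 0 then
       (if y = dec_all n x then (real k - real m) / real k else 0)
       + (\<Sum>l<m. if y = incr x l then 1 / real k else 0)
     else if j < m then
       (\<Sum>l<m. if y = incr x l then
                  (if x l = 0 then (real k - (real m - real j)) / (real k * real j)
                   else 1 / real k)
                else 0)
     else
       (\<Sum>l<m. if y = unitv l then 1 / real m else 0))"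

definition stationary :: "nat \<Rightarrow> nat \<Rightarrow> (nat \<Rightarrow> nat) pmf \<Rightarrow> bool" where
  "stationary n k p \<longleftrightarrow> set_pmf p \<subseteq> states n \<and>
     (\<forall>y\<in>states n. ((\<lambda>x. pmf p x * trans_prob n k x y) has_sum pmf p y) (states n))"

end

theory Submission
  imports Defs
begin

(* V(x) = n * \<Sum>i x_i^2 - (\<Sum>i x_i)^2 is a Lyapunov function for X: in each of the three regimes
   of the chain (no zero coordinate, some zero coordinates, x = 0) one step changes its expectation
   by exactly (n - 1) - 2(k - n)/k |x|. By the Foster-Lyapunov comparison argument a stationary
   distribution \<pi> then satisfies 2(k - n)/k E_\<pi>|Q| \<le> n - 1: stationarity gives E_\<pi>[Pg] = E_\<pi>[g]
   for the bounded truncations g = min V N, where it can be cancelled, and N is then let grow. *)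

lemma has_sum_point_mass:
  fixes g :: "'a \<Rightarrow> real"
  assumes "a \<in> A"
  shows "((\<lambda>y. (if y = a then c else 0) * g y) has_sum (c * g a)) A"
proof -
  have "((\<lambda>y. (if y = a then c else 0) * g y) has_sum (c * g a)) {a}"
    by (rule has_sum_finiteI) auto
  then show ?thesis
    by (subst (asm) has_sum_cong_neutral[where T = A]) (use assms in auto)
qed

lemma has_sum_sum:
  fixes f :: "'i \<Rightarrow> 'a \<Rightarrow> 'b::topological_comm_monoid_add"
  assumes "finite I" "\<And>i. i \<in> I \<Longrightarrow> (f i has_sum s i) A"
  shows "((\<lambda>y. \<Sum>i\<in>I. f i y) has_sum (\<Sum>i\<in>I. s i)) A"
  using assms by (induction I rule: finite_induct) (auto intro: has_sum_add)

lemma has_sum_point_masses: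
  fixes g :: "'a \<Rightarrow> real"
  assumes "finite I" "\<And>i. i \<in> I \<Longrightarrow> t i \<in> A"
  shows "((\<lambda>y. (\<Sum>i\<in>I. if y = t i then c i else 0) * g y) has_sum (\<Sum>i\<in>I. c i * g (t i))) A"
  unfolding sum_distrib_right by (intro has_sum_sum has_sum_point_mass assms)

lemma pmf_summable_on: "pmf p summable_on A"
  using pmf_abs_summable abs_summable_equivalent abs_summable_summable by blast

lemma pmf_times_bounded_summable_on:
  fixes h :: "'a \<Rightarrow> real"
  assumes "\<And>x. x \<in> A \<Longrightarrow> 0 \<le> h x \<and> h x \<le> B"
  shows "(\<lambda>x. pmf p x * h x) summable_on A"
proof (rule summable_on_comparison_test)
  show "(\<lambda>x. pmf p x * B) summable_on A"
    by (intro summable_on_cmult_left pmf_summable_on)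
qed (use assms in \<open>auto intro: mult_left_mono\<close>)

lemma pmf_has_sum_1:
  assumes "set_pmf p \<subseteq> A"
  shows "(pmf p has_sum 1) A"
  using infsetsum_pmf_eq_1[OF assms] infsetsum_infsum[OF pmf_abs_summable]
  by (metis pmf_summable_on has_sum_infsum)

lemma integrable_measure_pmf_if_summable_on:
  fixes f :: "'a \<Rightarrow> real"
  assumes "(\<lambda>x. pmf p x * f x) summable_on A" "set_pmf p \<subseteq> A" "\<And>x. x \<in> A \<Longrightarrow> 0 \<le> f x"
  shows "integrable (measure_pmf p) f"
proof -
  have "(\<lambda>x. norm (pmf p x * f x)) summable_on A"
    using assms(1) by (rule summable_on_cong[THEN iffD1, rotated]) (use assms(3) in auto)
  then have "(\<lambda>x. norm (pmf p x * f x)) summable_on UNIV"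
    by (rule summable_on_cong_neutral[THEN iffD1, rotated -1])
       (use assms(2) in \<open>auto simp: set_pmf_iff\<close>)
  then have "integrable (count_space UNIV) (\<lambda>x. pmf p x *\<^sub>R f x)"
    using abs_summable_equivalent[of "\<lambda>x. pmf p x * f x" UNIV]
    by (simp add: abs_summable_on_def)
  then show ?thesis
    by (subst measure_pmf_eq_density, subst integrable_density) auto
qed

locale stationary_kernel =
  fixes S :: "'a set" and P :: "'a \<Rightarrow> 'a \<Rightarrow> real" and p :: "'a pmf"
  assumes kernel_nonneg: "x \<in> S \<Longrightarrow> y \<in> S \<Longrightarrow> 0 \<le> P x y"
    and kernel_has_sum_1: "x \<in> S \<Longrightarrow> (P x has_sum 1) S"
    and support_subset: "set_pmf p \<subseteq> S"
    and stationary: "y \<in> S \<Longrightarrow> ((\<lambda>x. pmf p x * P x y) has_sum pmf p y) S"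
begin

lemma kernel_step_bounds:
  assumes x: "x \<in> S" and g: "\<And>y. y \<in> S \<Longrightarrow> 0 \<le> g y \<and> g y \<le> B"
    and Pg: "((\<lambda>y. P x y * g y) has_sum G) S"
  shows "0 \<le> G" and "G \<le> B"
proof -
  show "0 \<le> G"
    by (rule has_sum_nonneg[OF Pg]) (use x g kernel_nonneg in auto)
  have "((\<lambda>y. P x y * B) has_sum B) S"
    using has_sum_cmult_left[OF kernel_has_sum_1[OF x], of B] by simp
  then show "G \<le> B"
    by (rule has_sum_mono[OF Pg]) (use x g kernel_nonneg in \<open>auto intro: mult_left_mono\<close>)
qed

lemma infsum_stationary_step:
  assumes g: "\<And>y. y \<in> S \<Longrightarrow> 0 \<le> g y \<and> g y \<le> B"
    and Pg: "\<And>x. x \<in> S \<Longrightarrow> ((\<lambda>y. P x y * g y) has_sum Pg x) S"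
  shows "(\<Sum>\<^sub>\<infinity>x\<in>S. pmf p x * Pg x) = (\<Sum>\<^sub>\<infinity>y\<in>S. pmf p y * g y)"
proof -
  define F where "F x y = pmf p x * (P x y * g y)" for x y
  have rows: "(F x has_sum pmf p x * Pg x) S" if "x \<in> S" for x
    unfolding F_def by (rule has_sum_cmult_right[OF Pg[OF that]])
  have columns: "((\<lambda>x. F x y) has_sum pmf p y * g y) S" if "y \<in> S" for y
    unfolding F_def mult.assoc[symmetric] by (rule has_sum_cmult_left[OF stationary[OF that]])
  have "(\<lambda>x. pmf p x * Pg x) summable_on S"
    by (rule pmf_times_bounded_summable_on) (use kernel_step_bounds[OF _ g Pg] in blast)
  then have "(\<lambda>(x, y). F x y) summable_on S \<times> S"
    by (intro summable_on_SigmaI[where g = "\<lambda>x. pmf p x * Pg x"])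
       (use rows g kernel_nonneg in \<open>auto simp: F_def[abs_def]\<close>)
  then have "(\<Sum>\<^sub>\<infinity>x\<in>S. \<Sum>\<^sub>\<infinity>y\<in>S. F x y) = (\<Sum>\<^sub>\<infinity>y\<in>S. \<Sum>\<^sub>\<infinity>x\<in>S. F x y)"
    by (rule infsum_swap_banach)
  then show ?thesis
    by (simp add: infsumI[OF rows] infsumI[OF columns] cong: infsum_cong)
qed

context
  fixes V f PV :: "'a \<Rightarrow> real" and b :: real
  assumes V_nonneg: "\<And>x. x \<in> S \<Longrightarrow> 0 \<le> V x"
    and f_nonneg: "\<And>x. x \<in> S \<Longrightarrow> 0 \<le> f x"
    and b_nonneg: "0 \<le> b"
    and PV: "\<And>x. x \<in> S \<Longrightarrow> ((\<lambda>y. P x y * V y) has_sum PV x) S"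
    and drift: "\<And>x. x \<in> S \<Longrightarrow> PV x + f x \<le> V x + b"
begin

lemma truncated_drift_bound:
  assumes N: "0 \<le> N"
  obtains H where "((\<lambda>x. pmf p x * (if V x \<le> N then f x else 0)) has_sum H) S" and "H \<le> b"
proof -
  define g where "g y = min (V y) N" for y
  define h where "h x = (if V x \<le> N then f x else 0)" for x
  define Pg where "Pg x = (\<Sum>\<^sub>\<infinity>y\<in>S. P x y * g y)" for x
  have g: "0 \<le> g y \<and> g y \<le> N" if "y \<in> S" for y
    using V_nonneg[OF that] N by (simp add: g_def)
  have Pg: "((\<lambda>y. P x y * g y) has_sum Pg x) S" if x: "x \<in> S" for x
  proof -
    have "(\<lambda>y. P x y * N) summable_on S"
      using has_sum_cmult_left[OF kernel_has_sum_1[OF x]] by (auto simp: summable_on_def)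
    then have "(\<lambda>y. P x y * g y) summable_on S"
      by (rule summable_on_comparison_test) (use x g kernel_nonneg in \<open>auto intro: mult_left_mono\<close>)
    then show ?thesis by (simp add: Pg_def has_sum_infsum)
  qed
  have step: "Pg x + h x \<le> g x + b" if x: "x \<in> S" for x
  proof (cases "V x \<le> N")
    case True
    have "Pg x \<le> PV x"
      by (rule has_sum_mono[OF Pg[OF x] PV[OF x]])
         (use x kernel_nonneg in \<open>auto simp: g_def intro: mult_left_mono\<close>)
    then show ?thesis using drift[OF x] True by (simp add: g_def h_def)
  next
    case False
    then show ?thesis using kernel_step_bounds(2)[OF x g Pg[OF x]] b_nonneg by (simp add: g_def h_def)
  qed
  have h: "0 \<le> h x \<and> h x \<le> N + b" if x: "x \<in> S" for x
    using step[OF x] kernel_step_bounds(1)[OF x g Pg[OF x]] g[OF x] f_nonneg[OF x] by (auto simp: h_def)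
  define G where "G = (\<Sum>\<^sub>\<infinity>x\<in>S. pmf p x * g x)"
  define H where "H = (\<Sum>\<^sub>\<infinity>x\<in>S. pmf p x * h x)"
  have hs_h: "((\<lambda>x. pmf p x * h x) has_sum H) S"
    unfolding H_def by (intro has_sum_infsum pmf_times_bounded_summable_on) (use h in blast)
  have "((\<lambda>x. pmf p x * h x + pmf p x * Pg x) has_sum (H + G)) S"
  proof (intro has_sum_add hs_h)
    have "(\<lambda>x. pmf p x * Pg x) summable_on S"
      by (rule pmf_times_bounded_summable_on) (use kernel_step_bounds[OF _ g Pg] in blast)
    then show "((\<lambda>x. pmf p x * Pg x) has_sum G) S"
      using infsum_stationary_step[OF g Pg] by (metis G_def has_sum_infsum)
  qed
  moreover have "((\<lambda>x. pmf p x * g x + pmf p x * b) has_sum (G + b)) S"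
  proof (intro has_sum_add)
    show "((\<lambda>x. pmf p x * g x) has_sum G) S"
      unfolding G_def by (intro has_sum_infsum pmf_times_bounded_summable_on) (use g in blast)
    show "((\<lambda>x. pmf p x * b) has_sum b) S"
      using has_sum_cmult_left[OF pmf_has_sum_1[OF support_subset], of b] by simp
  qed
  ultimately have "H + G \<le> G + b"
    by (rule has_sum_mono)
       (use step in \<open>auto simp flip: distrib_left simp: add.commute intro: mult_left_mono\<close>)
  then show ?thesis using that hs_h by (simp add: h_def)
qed

lemma drift_integrable: "integrable (measure_pmf p) f"
proof (rule integrable_measure_pmf_if_summable_on[OF _ support_subset f_nonneg])
  show "(\<lambda>x. pmf p x * f x) summable_on S"
  proof (rule nonneg_bdd_above_summable_on)
    show "bdd_above (sum (\<lambda>x. pmf p x * f x) ` {F. F \<subseteq> S \<and> finite F})"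
    proof (rule bdd_aboveI2[where M = b], clarify)
      fix F assume F: "F \<subseteq> S" "finite F"
      define N where "N = (\<Sum>x\<in>F. V x)"
      have V_le_N: "V x \<le> N" if "x \<in> F" for x
        unfolding N_def by (rule member_le_sum) (use that F V_nonneg in auto)
      obtain H where H: "((\<lambda>x. pmf p x * (if V x \<le> N then f x else 0)) has_sum H) S" "H \<le> b"
        using truncated_drift_bound[of N] F V_nonneg by (force simp: N_def intro: sum_nonneg)
      have "(\<Sum>x\<in>F. pmf p x * f x) = (\<Sum>x\<in>F. pmf p x * (if V x \<le> N then f x else 0))"
        by (simp add: V_le_N)
      also have "\<dots> \<le> H"
        by (rule finite_sum_le_has_sum[OF H(1) F(2,1)]) (simp add: f_nonneg)
      finally show "(\<Sum>x\<in>F. pmf p x * f x) \<le> b" using H(2) by simp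
    qed
  qed (simp add: f_nonneg)
qed

end

end

definition trans_expect :: "nat \<Rightarrow> nat \<Rightarrow> (nat \<Rightarrow> nat) \<Rightarrow> ((nat \<Rightarrow> nat) \<Rightarrow> real) \<Rightarrow> real" where
  "trans_expect n k x g =
    (let m = n - 1; j = nzeros n x in
     if j = 0 then
       (real k - real m) / real k * g (dec_all n x)
       + (\<Sum>l<m. 1 / real k * g (incr x l))
     else if j < m then
       (\<Sum>l<m. (if x l = 0 then (real k - (real m - real j)) / (real k * real j)
                   else 1 / real k) * g (incr x l))
     else
       (\<Sum>l<m. 1 / real m * g (unitv l)))"

lemma trans_prob_has_sum:
  assumes "x \<in> states n"
  shows "((\<lambda>y. trans_prob n k x y * g y) has_sum trans_expect n k x g) (states n)"
proof -
  have targets: "dec_all n x \<in> states n"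
    "\<And>l. l < n - 1 \<Longrightarrow> incr x l \<in> states n" "\<And>l. l < n - 1 \<Longrightarrow> unitv l \<in> states n"
    using assms by (auto simp: states_def dec_all_def incr_def unitv_def)
  have if_times: "(\<lambda>y. (if b then u y else v y) * g y)
                    = (if b then (\<lambda>y. u y * g y) else (\<lambda>y. v y * g y))" for b u v
    by auto
  show ?thesis
    unfolding trans_prob_def trans_expect_def Let_def if_times distrib_right
    by (simp only: split: if_split)
       (intro conjI impI has_sum_add has_sum_point_mass has_sum_point_masses; simp add: targets)
qed

lemma trans_prob_nonneg:
  assumes "n \<le> k"
  shows "0 \<le> trans_prob n k x y"
  using assms by (auto simp: trans_prob_def Let_def intro!: add_nonneg_nonneg sum_nonneg divide_nonneg_nonneg)

lemma nzeros_eq_0_iff: "nzeros n x = 0 \<longleftrightarrow> (\<forall>i<n - 1. x i \<noteq> 0)"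
  by (auto simp: nzeros_def)

lemma zero_if_nzeros_ge:
  assumes "n - 1 \<le> nzeros n x" "i < n - 1"
  shows "x i = 0"
proof -
  have "{i. i < n - 1 \<and> x i = 0} = {..<n - 1}"
    using assms(1) by (intro card_seteq) (auto simp: nzeros_def)
  then show ?thesis using assms(2) by auto
qed

lemma zero_weights_sum:
  assumes "0 < nzeros n x" "nzeros n x < n - 1" "0 < k"
  defines "w \<equiv> \<lambda>l. if x l = 0
                   then (real k - (real (n - 1) - real (nzeros n x))) / (real k * real (nzeros n x))
                   else 1 / real k"
  shows "(\<Sum>l<n - 1. w l) = 1" and "(\<Sum>l<n - 1. w l * real (x l)) = real (norm1 n x) / real k"
proof -
  let ?Z = "{..<n - 1} \<inter> {l. x l = 0}"
  have card_zeros: "card ?Z = nzeros n x"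
    unfolding nzeros_def by (rule arg_cong[where f = card]) auto
  have "{..<n - 1} \<inter> - {l. x l = 0} = {..<n - 1} - ?Z"
    by auto
  then have "card ({..<n - 1} \<inter> - {l. x l = 0}) = n - 1 - nzeros n x"
    using card_zeros by (simp add: card_Diff_subset)
  with card_zeros show "(\<Sum>l<n - 1. w l) = 1"
    using assms(1-3) by (simp add: w_def sum.If_cases of_nat_diff field_simps)
  have "w l * real (x l) = real (x l) / real k" for l
    by (simp add: w_def)
  then show "(\<Sum>l<n - 1. w l * real (x l)) = real (norm1 n x) / real k"
    by (simp add: norm1_def sum_divide_distrib)
qed

lemma trans_expect_one:
  assumes "2 \<le> n" "0 < k"
  shows "trans_expect n k x (\<lambda>_. 1) = 1"
proof -
  consider "nzeros n x = 0" | "0 < nzeros n x" "nzeros n x < n - 1" | "n - 1 \<le> nzeros n x"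
    by linarith
  then show ?thesis
  proof cases
    case 1
    then show ?thesis using assms by (simp add: trans_expect_def field_simps)
  next
    case 2
    then show ?thesis
      using zero_weights_sum(1)[OF 2 assms(2)] by (simp add: trans_expect_def Let_def cong: if_cong)
  next
    case 3
    then show ?thesis using assms by (simp add: trans_expect_def Let_def)
  qed
qed

definition lyapunov :: "nat \<Rightarrow> (nat \<Rightarrow> nat) \<Rightarrow> real" where
  "lyapunov n x = real n * (\<Sum>i<n - 1. real (x i) ^ 2) - real (norm1 n x) ^ 2"

lemma lyapunov_nonneg: "0 \<le> lyapunov n x"
proof -
  have "real (norm1 n x) ^ 2 \<le> (\<Sum>i<n - 1. real (x i) ^ 2) * real (n - 1)"
    using sum_squared_le_sum_of_squares[of "\<lambda>i. real (x i)" "{..<n - 1}"] by (simp add: norm1_def)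
  also have "\<dots> \<le> (\<Sum>i<n - 1. real (x i) ^ 2) * real n"
    by (intro mult_left_mono sum_nonneg) auto
  finally show ?thesis by (simp add: lyapunov_def mult.commute)
qed

lemma lyapunov_incr:
  assumes "l < n - 1"
  shows "lyapunov n (incr x l) = lyapunov n x + 2 * real n * real (x l) - 2 * real (norm1 n x) + real (n - 1)"
proof -
  have "real (incr x l i) = real (x i) + (if i = l then 1 else 0)" for i
    by (simp add: incr_def)
  then have "(\<Sum>i<n - 1. real (incr x l i) ^ 2) = (\<Sum>i<n - 1. real (x i) ^ 2) + 2 * real (x l) + 1"
    and "real (norm1 n (incr x l)) = real (norm1 n x) + 1"
    using assms
    by (simp_all add: norm1_def power2_eq_square algebra_simps sum.distrib
        if_distrib[of "\<lambda>t. _ * t"] cong: if_cong)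
  then show ?thesis
    using assms by (simp add: lyapunov_def of_nat_diff power2_eq_square algebra_simps)
qed

lemma lyapunov_dec_all:
  assumes "\<forall>i<n - 1. x i \<noteq> 0" "0 < n"
  shows "lyapunov n (dec_all n x) = lyapunov n x - 2 * real (norm1 n x) + real (n - 1)"
proof -
  have dec: "real (dec_all n x i) = real (x i) - 1" if "i < n - 1" for i
    using assms(1) that by (simp add: dec_all_def of_nat_diff Suc_leI)
  have "(\<Sum>i<n - 1. real (dec_all n x i) ^ 2) = (\<Sum>i<n - 1. (real (x i) - 1) ^ 2)"
    and "real (norm1 n (dec_all n x)) = (\<Sum>i<n - 1. real (x i) - 1)"
    by (simp_all add: norm1_def dec)
  then have sq: "(\<Sum>i<n - 1. real (dec_all n x i) ^ 2)
                   = (\<Sum>i<n - 1. real (x i) ^ 2) - 2 * real (norm1 n x) + real (n - 1)"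
    and nrm: "real (norm1 n (dec_all n x)) = real (norm1 n x) - real (n - 1)"
    by (simp_all add: norm1_def power2_diff sum.distrib sum_subtractf flip: sum_distrib_left)
  show ?thesis
    unfolding lyapunov_def sq nrm using assms(2) by (simp add: of_nat_diff power2_eq_square algebra_simps)
qed

lemma lyapunov_unitv: "l < n - 1 \<Longrightarrow> lyapunov n (unitv l) = real (n - 1)"
  by (simp add: lyapunov_def norm1_def unitv_def of_nat_diff if_distrib[of real] if_distrib[of "\<lambda>t. t ^ 2"]
      cong: if_cong)

lemma trans_expect_lyapunov:
  assumes "2 \<le> n" "0 < k"
  shows "trans_expect n k x (lyapunov n)
           = lyapunov n x - 2 * (real k - real n) / real k * real (norm1 n x) + real (n - 1)"
proof -
  define c where "c = lyapunov n x - 2 * real (norm1 n x) + real (n - 1)"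
  have incr: "lyapunov n (incr x l) = c + 2 * real n * real (x l)" if "l < n - 1" for l
    using lyapunov_incr[OF that] by (simp add: c_def)
  have goal: "?thesis \<longleftrightarrow>
      trans_expect n k x (lyapunov n) = c + 2 * real n * (real (norm1 n x) / real k)"
    using assms(2) by (auto simp: c_def field_simps)
  consider "nzeros n x = 0" | "0 < nzeros n x" "nzeros n x < n - 1" | "n - 1 \<le> nzeros n x"
    by linarith
  then show ?thesis
  proof cases
    case 1
    have dec: "lyapunov n (dec_all n x) = c"
      using lyapunov_dec_all[of n x] 1 assms(1) by (simp add: nzeros_eq_0_iff c_def)
    have "(\<Sum>l<n - 1. 1 / real k * lyapunov n (incr x l))
            = (\<Sum>l<n - 1. c / real k + 2 * real n / real k * real (x l))"
      by (rule sum.cong) (simp_all add: incr add_divide_distrib)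
    also have "\<dots> = real (n - 1) / real k * c + 2 * real n * (real (norm1 n x) / real k)"
      by (simp add: sum.distrib norm1_def sum_divide_distrib sum_distrib_left)
    finally have "trans_expect n k x (lyapunov n)
        = (real k - real (n - 1)) / real k * c + real (n - 1) / real k * c
          + 2 * real n * (real (norm1 n x) / real k)"
      using 1 by (simp add: trans_expect_def Let_def dec)
    also have "\<dots> = c + 2 * real n * (real (norm1 n x) / real k)"
      using assms(2) by (simp add: field_simps)
    finally show ?thesis unfolding goal .
  next
    case 2
    define w where "w l = (if x l = 0
      then (real k - (real (n - 1) - real (nzeros n x))) / (real k * real (nzeros n x))
      else 1 / real k)" for l
    have "trans_expect n k x (lyapunov n) = (\<Sum>l<n - 1. w l * lyapunov n (incr x l))"
      using 2 by (simp add: trans_expect_def Let_def w_def cong: if_cong)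
    also have "\<dots> = (\<Sum>l<n - 1. c * w l + 2 * real n * (w l * real (x l)))"
      by (rule sum.cong) (simp_all add: incr algebra_simps)
    also have "\<dots> = c + 2 * real n * (real (norm1 n x) / real k)"
      using zero_weights_sum[OF 2 assms(2), folded w_def]
      by (simp add: sum.distrib flip: sum_distrib_left)
    finally show ?thesis unfolding goal .
  next
    case 3
    have "lyapunov n x = 0" "norm1 n x = 0"
      using zero_if_nzeros_ge[OF 3] by (simp_all add: lyapunov_def norm1_def)
    moreover have "0 < nzeros n x"
      using 3 assms(1) by linarith
    ultimately show ?thesis
      using 3 by (simp add: trans_expect_def Let_def lyapunov_unitv)
  qed
qed

theorem proposition8p2:
  fixes n k :: nat and p :: "(nat \<Rightarrow> nat) pmf"
  assumes "n \<ge> 3" and "k > n"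
    and "stationary n k p"
  shows "integrable (measure_pmf p) (\<lambda>x. real (norm1 n x))"
proof -
  have n: "2 \<le> n" and k: "0 < k"
    using assms(1,2) by simp_all
  interpret stationary_kernel "states n" "trans_prob n k" p
  proof
    show "0 \<le> trans_prob n k x y" for x y
      using assms(2) by (intro trans_prob_nonneg) simp
    show "(trans_prob n k x has_sum 1) (states n)" if "x \<in> states n" for x
      using trans_prob_has_sum[OF that, of k "\<lambda>_. 1"] trans_expect_one[OF n k] by simp
  qed (use assms(3) in \<open>auto simp: stationary_def\<close>)
  define c where "c = 2 * (real k - real n) / real k"
  have "0 < c"
    using assms(2) by (simp add: c_def)
  have "integrable (measure_pmf p) (\<lambda>x. c * real (norm1 n x))"
  proof (rule drift_integrable[where V = "lyapunov n" and PV = "\<lambda>x. trans_expect n k x (lyapunov n)"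
        and b = "real (n - 1)"])
    show "0 \<le> c * real (norm1 n x)" for x
      using \<open>0 < c\<close> by simp
    show "trans_expect n k x (lyapunov n) + c * real (norm1 n x) \<le> lyapunov n x + real (n - 1)" for x
      using trans_expect_lyapunov[OF n k] by (simp add: c_def)
  qed (auto intro: lyapunov_nonneg trans_prob_has_sum)
  then show ?thesis
    using \<open>0 < c\<close> by simp
qed

end
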